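(* For every $n \in \mathbb{N}$, let $\lambda_n$ be the smallest positive integer such that $\lambda_n P^{(k)} \in E_n$ for every $P \in E_n$ and every $k \in \mathbb{N}$. Then $$\lambda_n = q_n = \prod_{p \text{ prime}} p^{\lfloor n/p \rfloor}.$$
   Context: For $n \in \mathbb{N}$, $E_n$ denotes the set of polynomials $P \in \mathbb{C}[X]$ of degree $\leq n$ (including the zero polynomial) such that $P(\mathbb{Z}) \subset \mathbb{Z}$; $P^{(k)}$ denotes the $k$-th derivative ($P^{(0)} = P$). For $n \in \mathbb{N}$, $$q_n = \mathrm{lcm}\bigl(\{1\}\cup\{i_1 i_2 \cdots i_k : k \in \mathbb{N}^*,\ i_1,\dots,i_k \in \mathbb{N}^*,\ i_1+\dots+i_k \leq n\}\bigr),$$ where $\mathbb{N}^*$ denotes the positive integers. $\lfloor\cdot\rfloor$ is the integer-part function. *)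

theory Defs
  imports "HOL-Computational_Algebra.Computational_Algebra"
begin

text \<open>E_n: complex polynomials of degree at most n mapping the integers into the integers
  (the zero polynomial is included, its degree being 0).\<close>
definition E :: "nat \<Rightarrow> complex poly set" where
  "E n = {P. degree P \<le> n \<and> (\<forall>z::int. poly P (of_int z) \<in> \<int>)}"

definition admissible :: "nat \<Rightarrow> nat \<Rightarrow> bool" where
  "admissible n l \<longleftrightarrow> (\<forall>P \<in> E n. \<forall>k::nat. smult (of_nat l) ((pderiv ^^ k) P) \<in> E n)"

definition lambda :: "nat \<Rightarrow> nat" where
  "lambda n = (LEAST l. 0 < l \<and> admissible n l)"

definition q :: "nat \<Rightarrow> nat" where
  "q n = Lcm ({1} \<union> {prod_list xs | xs. xs \<noteq> [] \<and> (\<forall>i\<in>set xs. 0 < i) \<and> sum_list xs \<le> n})"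

end

theory Submission
  imports Defs
begin

text \<open>
  An integer-valued polynomial P of degree at most w equals the sum over j \<le> w of
  (\<Delta>^j P)(0) * binom(x, j), with integral Newton coefficients (\<Delta>^j P)(0).
  The derivative of binom(x, j) at 0 is (-1)^(j-1)/j and j * q_a divides q_(a+j), so
  the property "q_(w-i) * (\<Delta>^i P)(0) is an integer for every i" survives differentiation.
  It holds on E_n for w = n and makes q_n * P integer-valued.

  Conversely, let l be admissible, p prime and m = \<lfloor>n/p\<rfloor>. The m-th derivative of
  binom(x, pm) at 0 is m! s / (pm)!, where s is the coefficient of x^m in
  x(x-1)...(x-pm+1). Modulo p this falling factorial is (x(x-1)...(x-p+1))^m, so
  s is congruent to ((-1)^(p-1) (p-1)!)^m and prime to p. As p^m m! divides (pm)!,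
  p^m divides l.

  Finally q_n is the product of the p^\<lfloor>n/p\<rfloor>: the valuation bound p * v_p(i) \<le> i
  shows that every product in the definition of q_n divides it, and p * ... * p
  (\<lfloor>n/p\<rfloor> factors) attains the bound.
\<close>

section \<open>Integer-valued polynomials and forward differences\<close>

definition int_valued :: "'a::comm_ring_1 poly \<Rightarrow> bool" where
  "int_valued P \<longleftrightarrow> (\<forall>z::int. poly P (of_int z) \<in> \<int>)"

lemma int_valued_poly_0: "int_valued P \<Longrightarrow> poly P 0 \<in> \<int>"
  unfolding int_valued_def by (metis of_int_0)

lemma E_iff: "P \<in> E n \<longleftrightarrow> degree P \<le> n \<and> int_valued P"
  by (simp add: E_def int_valued_def)

definition fwd_diff :: "'a::idom poly \<Rightarrow> 'a poly" where
  "fwd_diff P = pcompose P [:1, 1:] - P"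

lemma poly_fwd_diff [simp]: "poly (fwd_diff P) x = poly P (x + 1) - poly P x"
  by (simp add: fwd_diff_def poly_pcompose add.commute)

lemma fwd_diff_const [simp]: "fwd_diff [:c:] = 0"
  by (simp add: fwd_diff_def)

lemma fwd_diff_0 [simp]: "fwd_diff 0 = 0"
  by (simp add: fwd_diff_def)

lemma pderiv_fwd_diff: "pderiv (fwd_diff P) = fwd_diff (pderiv P)"
  by (simp add: fwd_diff_def pderiv_diff pderiv_pcompose pderiv_pCons)

lemma pderiv_funpow_fwd_diff: "pderiv ((fwd_diff ^^ i) P) = (fwd_diff ^^ i) (pderiv P)"
  by (induction i) (simp_all add: pderiv_fwd_diff)

lemma degree_fwd_diff_le: "degree (fwd_diff P) \<le> degree P - 1"
proof (cases "degree P = 0")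
  case True
  then show ?thesis by (auto elim: degree_eq_zeroE)
next
  case False
  have "degree (pcompose P [:1, 1:]) = degree P"
    by (simp add: degree_pcompose)
  moreover have "coeff (pcompose P [:1, 1:]) (degree P) = lead_coeff P"
    using lead_coeff_comp[of "[:1, 1:]" P] by (simp add: degree_pcompose)
  ultimately have "degree (fwd_diff P) \<le> degree P" "coeff (fwd_diff P) (degree P) = 0"
    unfolding fwd_diff_def by (metis degree_diff_le order_refl, simp)
  then have "degree (fwd_diff P) < degree P \<or> fwd_diff P = 0"
    by (metis le_neq_implies_less leading_coeff_0_iff)
  then show ?thesis by auto
qed

lemma degree_funpow_fwd_diff_le: "degree ((fwd_diff ^^ k) P) \<le> degree P - k"
  by (induction k) (auto intro: order_trans [OF degree_fwd_diff_le])

lemma funpow_fwd_diff_eq_0: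
  assumes "degree P < i"
  shows "(fwd_diff ^^ i) P = 0"
proof -
  from degree_funpow_fwd_diff_le [of "degree P" P] obtain c where "(fwd_diff ^^ degree P) P = [:c:]"
    by (auto elim: degree_eq_zeroE)
  then have "(fwd_diff ^^ (k + Suc (degree P))) P = 0" for k
    by (induction k) simp_all
  from this[of "i - Suc (degree P)"] show ?thesis
    using assms by simp
qed

lemma int_valued_fwd_diff:
  assumes "int_valued P"
  shows "int_valued (fwd_diff P)"
  unfolding int_valued_def
proof
  fix z :: int
  have "poly P (of_int (z + 1)) \<in> \<int>" "poly P (of_int z) \<in> \<int>"
    using assms unfolding int_valued_def by blast+
  then show "poly (fwd_diff P) (of_int z) \<in> \<int>"
    by simp
qed

lemma int_valued_funpow_fwd_diff: "int_valued P \<Longrightarrow> int_valued ((fwd_diff ^^ i) P)"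
  by (induction i) (simp_all add: int_valued_fwd_diff)

section \<open>Falling factorials and binomial polynomials\<close>

definition falling_poly :: "nat \<Rightarrow> 'a::comm_ring_1 poly" where
  "falling_poly j = (\<Prod>i<j. [:- of_nat i, 1:])"

lemma falling_poly_Suc: "falling_poly (Suc j) = falling_poly j * [:- of_nat j, 1:]"
  by (simp add: falling_poly_def)

lemma falling_poly_add:
  "falling_poly (a + b) = falling_poly a * (\<Prod>r<b. [:- of_nat (a + r), 1:])"
proof (induction b)
  case (Suc b)
  show ?case
    by (simp only: add_Suc_right falling_poly_Suc Suc.IH prod.lessThan_Suc mult.assoc)
qed (simp add: falling_poly_def)

lemma poly_falling_poly: "poly (falling_poly j) x = (\<Prod>i<j. x - of_nat i)"
  by (simp add: falling_poly_def poly_prod)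

lemma degree_falling_poly_le: "degree (falling_poly j :: 'a::comm_ring_1 poly) \<le> j"
proof -
  have "degree (falling_poly j :: 'a poly)
      \<le> sum (degree \<circ> (\<lambda>i. [:- of_nat i :: 'a, 1:])) {..<j}"
    unfolding falling_poly_def by (rule degree_prod_sum_le) simp
  then show ?thesis
    by simp
qed

lemma coeff_falling_poly_of_int:
  "coeff (falling_poly j :: 'a::comm_ring_1 poly) k = of_int (coeff (falling_poly j) k)"
proof (induction j arbitrary: k)
  case (Suc j)
  then show ?case
    by (simp add: falling_poly_Suc coeff_pCons split: nat.split)
qed (simp add: falling_poly_def)

lemma coeff_falling_poly_Suc_1:
  "coeff (falling_poly (Suc j) :: 'a::comm_ring_1 poly) 1 = (-1) ^ j * of_nat (fact j)"
proof -
  have "falling_poly (Suc j) = pCons (0 :: 'a) (\<Prod>i<j. [:- of_nat (Suc i), 1:])"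
    unfolding falling_poly_def prod.lessThan_Suc_shift by simp
  then have "coeff (falling_poly (Suc j) :: 'a poly) 1 = (\<Prod>i<j. - of_nat (Suc i))"
    by (simp add: poly_0_coeff_0 [symmetric] poly_prod)
  also have "\<dots> = (-1) ^ j * (\<Prod>i<j. of_nat (Suc i))"
    by (simp only: prod_uminus card_lessThan)
  also have "(\<Prod>i<j. of_nat (Suc i) :: 'a) = of_nat (fact j)"
    by (simp add: fact_prod_Suc atLeast0LessThan)
  finally show ?thesis .
qed

definition binomial_poly :: "nat \<Rightarrow> 'a::field_char_0 poly" where
  "binomial_poly j = smult (inverse (fact j)) (falling_poly j)"

lemma poly_binomial_poly: "poly (binomial_poly j) x = x gchoose j"
  by (simp add: binomial_poly_def poly_falling_poly gbinomial_prod_rev atLeast0LessThan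
      divide_inverse mult.commute)

lemma degree_binomial_poly_le: "degree (binomial_poly j) \<le> j"
  using degree_falling_poly_le[of j] by (simp add: binomial_poly_def)

lemma gbinomial_of_int_in_Ints: "(of_int z gchoose j :: 'a::field_char_0) \<in> \<int>"
proof (cases "z \<ge> 0")
  case True
  then have "(of_int z :: 'a) = of_nat (nat z)"
    by simp
  then show ?thesis
    by (simp add: binomial_gbinomial [symmetric])
next
  case False
  then have "(of_nat j - of_int z - 1 :: 'a) = of_nat (nat (int j - z - 1))"
    by simp
  then show ?thesis
    by (simp add: gbinomial_negated_upper [of "of_int z"] binomial_gbinomial [symmetric])
qed

lemma int_valued_binomial_poly: "int_valued (binomial_poly j)"
  by (simp add: int_valued_def poly_binomial_poly gbinomial_of_int_in_Ints)

text \<open>For \<open>j = 0\<close> both sides vanish, the right one because \<open>x / 0 = 0\<close>.\<close>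
lemma poly_pderiv_binomial_poly_0:
  "poly (pderiv (binomial_poly j)) 0 = ((-1) ^ (j - 1) / of_nat j :: 'a::field_char_0)"
proof (cases j)
  case 0
  then show ?thesis by (simp add: binomial_poly_def falling_poly_def)
next
  case (Suc j')
  have "poly (pderiv (binomial_poly j)) 0 = (coeff (falling_poly j) 1 / fact j :: 'a)"
    by (simp add: binomial_poly_def poly_0_coeff_0 coeff_pderiv field_simps)
  also have "coeff (falling_poly j) 1 = ((-1) ^ j' * fact j' :: 'a)"
    unfolding Suc coeff_falling_poly_Suc_1 by simp
  also have "(fact j :: 'a) = of_nat j * fact j'"
    by (simp add: Suc)
  finally show ?thesis
    by (simp add: Suc)
qed

section \<open>Newton expansion\<close>

definition newton_coeff :: "'a::idom poly \<Rightarrow> nat \<Rightarrow> 'a" where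
  "newton_coeff P j = poly ((fwd_diff ^^ j) P) 0"

lemma newton_coeff_funpow_fwd_diff: "newton_coeff ((fwd_diff ^^ i) P) j = newton_coeff P (j + i)"
  by (simp add: newton_coeff_def funpow_add)

lemma newton_coeff_fwd_diff: "newton_coeff (fwd_diff P) j = newton_coeff P (Suc j)"
  using newton_coeff_funpow_fwd_diff [of 1 P j] by simp

lemma newton_coeff_eq_0: "degree P < j \<Longrightarrow> newton_coeff P j = 0"
  by (simp add: newton_coeff_def funpow_fwd_diff_eq_0)

lemma newton_coeff_in_Ints: "int_valued P \<Longrightarrow> newton_coeff P j \<in> \<int>"
  unfolding newton_coeff_def by (intro int_valued_poly_0 int_valued_funpow_fwd_diff)

lemma poly_of_nat_newton:
  "poly P (of_nat x) = (\<Sum>j\<le>x. of_nat (x choose j) * newton_coeff P j)"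
proof (induction x arbitrary: P)
  case (Suc x)
  let ?d = "newton_coeff P"
  have "poly P (of_nat (Suc x)) = poly (fwd_diff P) (of_nat x) + poly P (of_nat x)"
    by (simp add: add.commute)
  also have "poly (fwd_diff P) (of_nat x) = (\<Sum>j\<le>x. of_nat (x choose j) * ?d (Suc j))"
    using Suc.IH [of "fwd_diff P"] by (simp add: newton_coeff_fwd_diff)
  also have "poly P (of_nat x) = ?d 0 + (\<Sum>j\<le>x. of_nat (x choose Suc j) * ?d (Suc j))"
    using Suc.IH [of P] sum.atMost_Suc_shift [of "\<lambda>j. of_nat (x choose j) * ?d j" x]
    by (simp add: binomial_eq_0)
  also have "(\<Sum>j\<le>x. of_nat (x choose j) * ?d (Suc j))
        + (?d 0 + (\<Sum>j\<le>x. of_nat (x choose Suc j) * ?d (Suc j)))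
      = ?d 0 + (\<Sum>j\<le>x. of_nat (Suc x choose Suc j) * ?d (Suc j))"
    by (simp add: sum.distrib ring_distribs add_ac)
  also have "\<dots> = (\<Sum>j\<le>Suc x. of_nat (Suc x choose j) * ?d j)"
    by (subst sum.atMost_Suc_shift) simp
  finally show ?case .
qed (simp add: newton_coeff_def)

lemma poly_eqI_of_nat:
  fixes P Q :: "'a::{idom,ring_char_0} poly"
  assumes "\<And>x. poly P (of_nat x) = poly Q (of_nat x)"
  shows "P = Q"
proof (rule ccontr)
  assume "P \<noteq> Q"
  then have "finite {x. poly (P - Q) x = 0}"
    by (intro poly_roots_finite) simp
  moreover have "\<nat> \<subseteq> {x. poly (P - Q) x = 0}"
    using assms by (auto elim: Nats_cases)
  ultimately show False
    using Nats_infinite finite_subset by blast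
qed

lemma newton_expansion:
  fixes P :: "'a::field_char_0 poly"
  assumes "degree P \<le> v"
  shows "P = (\<Sum>j\<le>v. smult (newton_coeff P j) (binomial_poly j))"
proof (rule poly_eqI_of_nat)
  fix x
  have "newton_coeff P j = 0" if "v < j" for j
    using assms that by (simp add: newton_coeff_eq_0)
  then have "(\<Sum>j\<le>x. of_nat (x choose j) * newton_coeff P j)
      = (\<Sum>j\<le>v. of_nat (x choose j) * newton_coeff P j)"
    by (intro sum.mono_neutral_cong) (auto simp: binomial_eq_0)
  then show "poly P (of_nat x) = poly (\<Sum>j\<le>v. smult (newton_coeff P j) (binomial_poly j)) (of_nat x)"
    by (simp add: poly_of_nat_newton [of P] poly_sum poly_binomial_poly binomial_gbinomial mult.commute)
qed

lemma poly_pderiv_0_newton: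
  fixes P :: "'a::field_char_0 poly"
  assumes "degree P \<le> v"
  shows "poly (pderiv P) 0 = (\<Sum>j\<le>v. newton_coeff P j * (-1) ^ (j - 1) / of_nat j)"
proof -
  have "pderiv P = (\<Sum>j\<le>v. smult (newton_coeff P j) (pderiv (binomial_poly j)))"
    by (subst newton_expansion [OF assms]) (simp add: higher_pderiv_sum [of 1, simplified] pderiv_smult)
  then show ?thesis
    by (simp add: poly_sum poly_pderiv_binomial_poly_0)
qed

lemma newton_coeff_pderiv:
  fixes P :: "'a::field_char_0 poly"
  assumes "degree P \<le> v"
  shows "newton_coeff (pderiv P) i = (\<Sum>j\<le>v. newton_coeff P (j + i) * (-1) ^ (j - 1) / of_nat j)"
proof -
  have "newton_coeff (pderiv P) i = poly (pderiv ((fwd_diff ^^ i) P)) 0"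
    by (simp add: newton_coeff_def pderiv_funpow_fwd_diff)
  also have "\<dots> = (\<Sum>j\<le>v. newton_coeff ((fwd_diff ^^ i) P) j * (-1) ^ (j - 1) / of_nat j)"
    by (rule poly_pderiv_0_newton) (use assms degree_funpow_fwd_diff_le [of i P] in simp)
  also have "\<dots> = (\<Sum>j\<le>v. newton_coeff P (j + i) * (-1) ^ (j - 1) / of_nat j)"
    by (simp add: newton_coeff_funpow_fwd_diff)
  finally show ?thesis .
qed

section \<open>The prime-power product\<close>

definition q_prod :: "nat \<Rightarrow> nat" where
  "q_prod n = (\<Prod>p\<in>{p. prime p \<and> p \<le> n}. p ^ (n div p))"

lemma q_prod_pos: "0 < q_prod n"
  unfolding q_prod_def by (rule prod_pos) (auto simp: prime_gt_0_nat)

lemma multiplicity_q_prod: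
  assumes "prime p"
  shows "multiplicity p (q_prod n) = n div p"
proof -
  let ?S = "{p::nat. prime p \<and> p \<le> n}"
  have "multiplicity p (q_prod n) = (\<Sum>r\<in>?S. multiplicity p (r ^ (n div r)))"
    unfolding q_prod_def using assms
    by (intro prime_elem_multiplicity_prod_distrib) (auto simp: prime_gt_0_nat)
  also have "\<dots> = (\<Sum>r\<in>?S. if r = p then n div p else 0)"
    by (intro sum.cong refl) (auto simp: assms multiplicity_distinct_prime_power)
  also have "\<dots> = n div p"
    using assms by auto
  finally show ?thesis .
qed

lemma dvd_q_prod_iff:
  assumes "0 < b"
  shows "b dvd q_prod n \<longleftrightarrow> (\<forall>p. prime p \<longrightarrow> multiplicity p b \<le> n div p)"
proof
  assume dvd: "b dvd q_prod n"
  show "\<forall>p. prime p \<longrightarrow> multiplicity p b \<le> n div p"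
  proof (intro allI impI)
    fix p :: nat
    assume "prime p"
    have "multiplicity p b \<le> multiplicity p (q_prod n)"
      using dvd q_prod_pos [of n] by (intro dvd_imp_multiplicity_le) simp_all
    then show "multiplicity p b \<le> n div p"
      by (simp add: multiplicity_q_prod \<open>prime p\<close>)
  qed
next
  assume "\<forall>p. prime p \<longrightarrow> multiplicity p b \<le> n div p"
  then show "b dvd q_prod n"
    using assms by (intro multiplicity_le_imp_dvd) (simp_all add: multiplicity_q_prod)
qed

lemma q_prod_dvdI:
  assumes "0 < l" and "\<And>p. prime p \<Longrightarrow> p ^ (n div p) dvd l"
  shows "q_prod n dvd l"
proof (rule multiplicity_le_imp_dvd)
  fix p :: nat
  assume "prime p"
  show "multiplicity p (q_prod n) \<le> multiplicity p l"
    unfolding multiplicity_q_prod [OF \<open>prime p\<close>]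
    by (rule multiplicity_geI) (use assms \<open>prime p\<close> in auto)
qed (use q_prod_pos [of n] in simp)

lemma mult_multiplicity_le:
  assumes "prime p" and "0 < x"
  shows "p * multiplicity p x \<le> x"
proof -
  define k where "k = multiplicity p x"
  have "p * k \<le> p ^ k"
  proof (cases k)
    case (Suc k')
    have "Suc k' \<le> 2 ^ k'"
      by (induction k') auto
    also have "\<dots> \<le> p ^ k'"
      using prime_ge_2_nat [OF assms(1)] by (rule power_mono) simp
    finally have "p * Suc k' \<le> p * p ^ k'"
      by (rule mult_le_mono2)
    then show ?thesis
      using Suc by simp
  qed simp
  also have "p ^ k \<le> x"
    unfolding k_def using assms by (intro dvd_imp_le multiplicity_dvd)
  finally show ?thesis
    unfolding k_def .
qed

lemma multiplicity_le_div:
  assumes "prime p" and "0 < x"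
  shows "multiplicity p x \<le> x div p"
  using mult_multiplicity_le [OF assms] prime_gt_0_nat [OF assms(1)]
  by (simp add: less_eq_div_iff_mult_less_eq mult.commute)

lemma prod_list_pos_nat: "\<forall>i\<in>set xs. 0 < i \<Longrightarrow> 0 < prod_list (xs :: nat list)"
  by (induction xs) auto

lemma mult_multiplicity_prod_list_le:
  assumes "prime p" and "\<forall>i\<in>set xs. 0 < i"
  shows "p * multiplicity p (prod_list xs) \<le> sum_list xs"
  using assms(2)
proof (induction xs)
  case (Cons x xs)
  then have "0 < prod_list xs"
    by (simp add: prod_list_pos_nat)
  then have "multiplicity p (prod_list (x # xs)) = multiplicity p x + multiplicity p (prod_list xs)"
    using assms(1) Cons.prems by (simp add: prime_elem_multiplicity_mult_distrib)
  then show ?case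
    using mult_multiplicity_le [OF assms(1), of x] Cons by (simp add: distrib_left)
qed simp

lemma mult_q_prod_dvd_q_prod_add:
  assumes "0 < t"
  shows "t * q_prod n dvd q_prod (n + t)"
proof -
  have pos: "0 < t * q_prod n"
    using assms q_prod_pos [of n] by simp
  show ?thesis
    unfolding dvd_q_prod_iff [OF pos]
  proof (intro allI impI)
    fix p :: nat
    assume p: "prime p"
    have "multiplicity p (t * q_prod n) = multiplicity p t + n div p"
      using p pos by (simp add: prime_elem_multiplicity_mult_distrib multiplicity_q_prod)
    also have "\<dots> \<le> t div p + n div p"
      using multiplicity_le_div [OF p assms] by simp
    also have "\<dots> \<le> (n + t) div p"
      unfolding div_add1_eq [of n t p] by simp
    finally show "multiplicity p (t * q_prod n) \<le> (n + t) div p" .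
  qed
qed

lemma q_prod_dvd_mono:
  assumes "m \<le> n"
  shows "q_prod m dvd q_prod n"
proof (cases "m = n")
  case False
  then have "(n - m) * q_prod m dvd q_prod n"
    using assms mult_q_prod_dvd_q_prod_add [of "n - m" m] by simp
  then show ?thesis
    using dvd_mult_right by blast
qed simp

lemma q_eq_q_prod: "q n = q_prod n"
proof (rule dvd_antisym)
  let ?A = "{prod_list xs | xs. xs \<noteq> [] \<and> (\<forall>i\<in>set xs. 0 < i) \<and> sum_list xs \<le> n}"
  show dvd: "q n dvd q_prod n"
    unfolding q_def
  proof (rule Lcm_least)
    fix b
    assume "b \<in> {1} \<union> ?A"
    then consider "b = 1" | xs where "b = prod_list xs" "\<forall>i\<in>set xs. 0 < i" "sum_list xs \<le> n"
      by blast
    then show "b dvd q_prod n"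
    proof cases
      case 2
      then have "0 < b"
        by (simp add: prod_list_pos_nat)
      moreover have "multiplicity p b \<le> n div p" if "prime p" for p
        using mult_multiplicity_prod_list_le [OF that 2(2)] 2 prime_gt_0_nat [OF that]
        by (simp add: less_eq_div_iff_mult_less_eq mult.commute)
      ultimately show ?thesis
        by (simp add: dvd_q_prod_iff)
    qed simp
  qed
  have "0 < q n"
    by (rule gr0I) (use dvd q_prod_pos [of n] in auto)
  then show "q_prod n dvd q n"
  proof (rule q_prod_dvdI)
    fix p :: nat
    assume "prime p"
    show "p ^ (n div p) dvd q n"
    proof (cases "n div p = 0")
      case False
      have "p ^ (n div p) \<in> ?A"
        using False \<open>prime p\<close> div_times_less_eq_dividend [of n p]
        by (intro CollectI exI [of _ "replicate (n div p) p"])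
          (auto simp: sum_list_replicate prime_gt_0_nat)
      then show ?thesis
        unfolding q_def by (intro dvd_Lcm UnI2)
    qed simp
  qed
qed

section \<open>The upper bound: q_n is admissible\<close>

definition q_integral :: "nat \<Rightarrow> 'a::field_char_0 poly \<Rightarrow> bool" where
  "q_integral w P \<longleftrightarrow>
    degree P \<le> w \<and> (\<forall>i. of_nat (q_prod (w - i)) * newton_coeff P i \<in> \<int>)"

lemma int_valued_imp_q_integral:
  "degree P \<le> w \<Longrightarrow> int_valued P \<Longrightarrow> q_integral w P"
  by (simp add: q_integral_def newton_coeff_in_Ints)

lemma q_integral_pderiv:
  fixes P :: "'a::field_char_0 poly"
  assumes P: "q_integral w P"
  shows "q_integral w (pderiv P)"
  unfolding q_integral_def
proof (intro conjI allI)
  have deg: "degree P \<le> w"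
    using P by (simp add: q_integral_def)
  then show "degree (pderiv P) \<le> w"
    by (simp add: degree_pderiv)
  fix i
  have summand: "of_nat (q_prod (w - i)) * (newton_coeff P (j + i) * (-1) ^ (j - 1) / of_nat j) \<in> \<int>"
    for j
  proof (cases "j = 0 \<or> w < j + i")
    case True
    then show ?thesis
      using deg by (auto simp: newton_coeff_eq_0)
  next
    case False
    define a where "a = w - i - j"
    define c where "c = newton_coeff P (j + i)"
    have "j * q_prod a dvd q_prod (a + j)"
      using False by (intro mult_q_prod_dvd_q_prod_add) simp
    then obtain r where r: "q_prod (a + j) = j * q_prod a * r"
      by (rule dvdE)
    have "w - i = a + j" "w - (j + i) = a"
      using False by (simp_all add: a_def)
    then have "of_nat (q_prod (w - i)) * (c * (-1) ^ (j - 1) / of_nat j)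
        = of_nat r * (-1) ^ (j - 1) * (of_nat (q_prod a) * c)"
      using False by (simp add: r field_simps)
    moreover have "of_nat (q_prod a) * c \<in> \<int>"
      using P unfolding q_integral_def c_def \<open>w - (j + i) = a\<close> [symmetric] by blast
    ultimately show ?thesis
      unfolding c_def by simp
  qed
  have "newton_coeff (pderiv P) i
      = (\<Sum>j\<le>w. newton_coeff P (j + i) * (-1) ^ (j - 1) / of_nat j)"
    using deg by (rule newton_coeff_pderiv)
  then show "of_nat (q_prod (w - i)) * newton_coeff (pderiv P) i \<in> \<int>"
    using summand by (simp add: sum_distrib_left Ints_sum)
qed

lemma q_integral_imp_int_valued:
  fixes P :: "'a::field_char_0 poly"
  assumes P: "q_integral w P"
  shows "int_valued (smult (of_nat (q_prod w)) P)"
  unfolding int_valued_def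
proof
  fix z :: int
  have summand: "of_nat (q_prod w) * (newton_coeff P j * poly (binomial_poly j) (of_int z)) \<in> \<int>"
    if "j \<le> w" for j
  proof -
    obtain r where r: "q_prod w = q_prod (w - j) * r"
      using q_prod_dvd_mono [of "w - j" w] by (rule dvdE) simp
    have coeff: "of_nat (q_prod (w - j)) * newton_coeff P j \<in> \<int>"
      using P by (simp add: q_integral_def)
    have "of_nat (q_prod w) * (newton_coeff P j * poly (binomial_poly j) (of_int z))
        = of_nat r * (of_nat (q_prod (w - j)) * newton_coeff P j) * (of_int z gchoose j)"
      unfolding r poly_binomial_poly of_nat_mult by (simp only: ac_simps)
    also have "\<dots> \<in> \<int>"
      by (rule Ints_mult [OF Ints_mult [OF Ints_of_nat coeff] gbinomial_of_int_in_Ints])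
    finally show ?thesis .
  qed
  have "P = (\<Sum>j\<le>w. smult (newton_coeff P j) (binomial_poly j))"
    using P by (intro newton_expansion) (simp add: q_integral_def)
  from arg_cong [OF this, of "\<lambda>X. poly (smult (of_nat (q_prod w)) X) (of_int z)"]
  have "poly (smult (of_nat (q_prod w)) P) (of_int z)
      = (\<Sum>j\<le>w. of_nat (q_prod w) * (newton_coeff P j * poly (binomial_poly j) (of_int z)))"
    by (simp add: poly_sum sum_distrib_left)
  also have "\<dots> \<in> \<int>"
    using summand by (intro Ints_sum) simp
  finally show "poly (smult (of_nat (q_prod w)) P) (of_int z) \<in> \<int>" .
qed

lemma admissible_q_prod: "admissible n (q_prod n)"
  unfolding admissible_def
proof (intro ballI allI)
  fix P k
  assume "P \<in> E n"
  then have "q_integral n P"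
    by (simp add: E_iff int_valued_imp_q_integral)
  then have "q_integral n ((pderiv ^^ k) P)"
    by (induction k) (simp_all add: q_integral_pderiv)
  then show "smult (of_nat (q_prod n)) ((pderiv ^^ k) P) \<in> E n"
    by (auto simp: E_iff q_integral_def q_integral_imp_int_valued
        intro: order_trans [OF degree_smult_le])
qed

section \<open>The lower bound\<close>

lemma poly_higher_pderiv_0: "poly ((pderiv ^^ k) P) 0 = fact k * coeff P k"
  by (simp add: poly_0_coeff_0 coeff_higher_pderiv pochhammer_fact)

lemma dvd_mult_diff_mult:
  fixes d :: "'a::comm_ring_1"
  assumes "d dvd a - b" and "d dvd c - e"
  shows "d dvd a * c - b * e"
proof -
  have "a * c - b * e = a * (c - e) + (a - b) * e"
    by (simp add: algebra_simps)
  then show ?thesis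
    using assms by simp
qed

lemma dvd_prod_diff_prod:
  fixes d :: "'a::comm_ring_1"
  assumes "\<And>i. i \<in> A \<Longrightarrow> d dvd f i - g i"
  shows "d dvd prod f A - prod g A"
  using assms
  by (induction A rule: infinite_finite_induct) (simp_all add: dvd_mult_diff_mult)

lemma const_dvd_falling_poly_mult_diff_power:
  "[:of_nat p:] dvd falling_poly (p * m) - (falling_poly p ^ m :: 'a::comm_ring_1 poly)"
proof (induction m)
  case (Suc m)
  have "[:of_nat p:] dvd [:- of_nat (p * m + r), 1:] - [:- of_nat r :: 'a, 1:]" for r
  proof -
    have "[:- of_nat (p * m + r), 1:] - [:- of_nat r, 1:] = [:of_nat p:] * [:- of_nat m :: 'a:]"
      by simp
    then show ?thesis
      by (metis dvd_triv_left)
  qed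
  then have factor:
      "[:of_nat p:] dvd (\<Prod>r<p. [:- of_nat (p * m + r), 1:]) - (falling_poly p :: 'a poly)"
    unfolding falling_poly_def by (rule dvd_prod_diff_prod)
  have split:
      "falling_poly (p * Suc m) = falling_poly (p * m) * (\<Prod>r<p. [:- of_nat (p * m + r), 1:])"
    using falling_poly_add [of "p * m" p] by (simp add: add.commute)
  show ?case
    unfolding split power_Suc2 by (rule dvd_mult_diff_mult [OF Suc.IH factor])
qed (simp add: falling_poly_def)

lemma coeff_power_eq_coeff_1_power:
  fixes P :: "'a::comm_semiring_1 poly"
  assumes "coeff P 0 = 0"
  shows "coeff (P ^ m) m = coeff P 1 ^ m"
proof -
  obtain Q where Q: "P = pCons 0 Q"
    using assms by (cases P) simp
  have "P = monom 1 1 * Q"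
    by (simp add: Q monom_Suc)
  then have "P ^ m = monom 1 m * Q ^ m"
    by (simp add: monom_power power_mult_distrib)
  then show ?thesis
    by (simp add: Q coeff_monom_mult coeff_0_power)
qed

lemma not_prime_dvd_coeff_falling_poly:
  assumes "prime p"
  shows "\<not> int p dvd coeff (falling_poly (p * m)) m"
proof
  obtain k where k: "p = Suc k"
    using prime_gt_0_nat [OF assms] gr0_implies_Suc by blast
  have "coeff (falling_poly (Suc k) :: int poly) 0 = 0"
    by (auto simp: falling_poly_def poly_0_coeff_0 [symmetric] poly_prod)
  then have "coeff (falling_poly (Suc k) ^ m :: int poly) m = coeff (falling_poly (Suc k)) 1 ^ m"
    by (rule coeff_power_eq_coeff_1_power)
  also have "\<dots> = ((-1) ^ k * fact k) ^ m"
    by (simp only: coeff_falling_poly_Suc_1 of_nat_fact)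
  finally have top: "coeff (falling_poly p ^ m :: int poly) m = ((-1) ^ k * fact k) ^ m"
    by (simp only: k)
  assume "int p dvd coeff (falling_poly (p * m)) m"
  moreover have "int p dvd coeff (falling_poly (p * m)) m - coeff (falling_poly p ^ m) m"
    using const_dvd_falling_poly_mult_diff_power [of p m, where 'a = int]
    by (simp add: const_poly_dvd_iff)
  ultimately have "int p dvd coeff (falling_poly (p * m)) m
      - (coeff (falling_poly (p * m)) m - coeff (falling_poly p ^ m) m)"
    by (rule dvd_diff)
  then have "int p dvd ((-1) ^ k * fact k) ^ m"
    by (simp add: top)
  then have "int p dvd (-1) ^ k * fact k"
    using prime_dvd_power [of "int p" _ m] assms by simp
  then have "int p dvd \<bar>(-1) ^ k * fact k\<bar>"
    by (simp only: dvd_abs_iff)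
  then have "int p dvd int (fact k)"
    by (simp add: abs_mult)
  then have "p dvd fact k"
    by (simp only: int_dvd_int_iff)
  then show False
    using assms k by (simp add: prime_dvd_fact_iff)
qed

lemma fact_add_eq_fact_mult_prod: "fact (a + b) = (fact a :: nat) * (\<Prod>i<b. a + Suc i)"
  by (induction b) (simp_all add: algebra_simps)

lemma power_mult_fact_dvd_fact_mult:
  fixes p :: nat
  assumes "0 < p"
  shows "p ^ m * fact m dvd fact (p * m)"
proof (induction m)
  case (Suc m)
  obtain k where k: "p = Suc k"
    using assms gr0_implies_Suc by blast
  have "fact (p * Suc m) = fact (p * m) * (\<Prod>i<p. p * m + Suc i)"
    using fact_add_eq_fact_mult_prod [of "p * m" p] by (simp add: add.commute)
  also have "(\<Prod>i<p. p * m + Suc i) = (\<Prod>i<k. p * m + Suc i) * (p * Suc m)"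
    by (simp add: k)
  finally have fact_eq:
      "fact (p * Suc m) = fact (p * m) * (\<Prod>i<k. p * m + Suc i) * (p * Suc m)"
    by (simp only: mult.assoc)
  have power_eq: "p ^ Suc m * fact (Suc m) = p ^ m * fact m * (p * Suc m)"
    by (simp add: algebra_simps)
  show ?case
    unfolding fact_eq power_eq by (rule mult_dvd_mono [OF dvd_mult2 [OF Suc.IH] dvd_refl])
qed simp

lemma binomial_poly_in_E: "N \<le> n \<Longrightarrow> binomial_poly N \<in> E n"
  by (auto simp: E_iff intro: order_trans [OF degree_binomial_poly_le] int_valued_binomial_poly)

lemma poly_higher_pderiv_binomial_poly_0:
  "poly ((pderiv ^^ m) (binomial_poly N)) 0
    = (of_int (fact m * coeff (falling_poly N) m) / fact N :: 'a::field_char_0)"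
  by (simp add: poly_higher_pderiv_0 binomial_poly_def field_simps
      coeff_falling_poly_of_int [of N m, where 'a = 'a])

lemma prime_power_dvd_of_fact_dvd:
  fixes c :: int
  assumes p: "prime p" and dvd: "fact (p * m) dvd int l * fact m * c" and "\<not> int p dvd c"
  shows "p ^ m dvd l"
proof -
  have "int (p ^ m * fact m) dvd int (fact (p * m))"
    unfolding int_dvd_int_iff using p by (simp add: power_mult_fact_dvd_fact_mult prime_gt_0_nat)
  then have "int p ^ m * fact m dvd int l * c * fact m"
    using dvd by (simp add: ac_simps dvd_trans)
  then have "int p ^ m dvd int l * c"
    by simp
  moreover have "coprime (int p) c"
    using assms by (intro prime_imp_coprime) simp_all
  ultimately have "int p ^ m dvd int l"
    by (simp add: coprime_dvd_mult_left_iff)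
  then show ?thesis
    by (simp only: of_nat_power [symmetric] int_dvd_int_iff)
qed

lemma prime_power_dvd_admissible:
  assumes p: "prime p" and adm: "admissible n l"
  shows "p ^ (n div p) dvd l"
proof -
  define m where "m = n div p"
  define c where "c = coeff (falling_poly (p * m) :: int poly) m"
  have "p * m \<le> n"
    unfolding m_def by (simp add: mult.commute)
  then have "smult (of_nat l) ((pderiv ^^ m) (binomial_poly (p * m))) \<in> E n"
    using adm binomial_poly_in_E by (simp add: admissible_def)
  then have "poly (smult (of_nat l) ((pderiv ^^ m) (binomial_poly (p * m) :: complex poly))) 0 \<in> \<int>"
    by (intro int_valued_poly_0) (simp add: E_iff)
  also have "poly (smult (of_nat l) ((pderiv ^^ m) (binomial_poly (p * m) :: complex poly))) 0
      = of_int (int l * fact m * c) / of_int (fact (p * m))"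
    by (simp add: poly_higher_pderiv_binomial_poly_0 c_def)
  finally have "fact (p * m) = (0 :: int) \<or> fact (p * m) dvd int l * fact m * c"
    by (simp only: of_int_div_of_int_in_Ints_iff)
  then have "fact (p * m) dvd int l * fact m * c"
    using fact_nonzero [of "p * m"] by blast
  then show ?thesis
    unfolding m_def
    using not_prime_dvd_coeff_falling_poly [OF p, of m] c_def m_def
    by (intro prime_power_dvd_of_fact_dvd [OF p]) simp_all
qed

theorem theorem4:
  fixes n :: nat
  shows "0 < q n \<and> admissible n (q n) \<and> (\<forall>l. 0 < l \<and> admissible n l \<longrightarrow> q n \<le> l)
         \<and> lambda n = q n
         \<and> q n = (\<Prod>p\<in>{p. prime p \<and> p \<le> n}. p ^ (n div p))"
proof -
  have minimal: "q n \<le> l" if "0 < l" and "admissible n l" for l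
  proof -
    have "q n dvd l"
      unfolding q_eq_q_prod using that by (intro q_prod_dvdI prime_power_dvd_admissible)
    then show ?thesis
      using \<open>0 < l\<close> by (rule dvd_imp_le)
  qed
  have pos: "0 < q n" and adm: "admissible n (q n)"
    by (simp_all add: q_eq_q_prod q_prod_pos admissible_q_prod)
  moreover have "lambda n = q n"
    unfolding lambda_def using pos adm minimal by (intro Least_equality) auto
  ultimately show ?thesis
    using minimal by (simp add: q_eq_q_prod q_prod_def)
qed

end
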